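(* Let $T>0$, $p>1$, $\beta>0$, and let $\varphi,\omega\in L^2(\mathbb{R})$. Let $w=R_\beta\varphi$ and $v=R_\beta\omega$ be the regularized solutions corresponding to the final values $\varphi$ and $\omega$, respectively. Then for every $t\in[0,T]$, $$\|w(\cdot,t)-v(\cdot,t)\|\le \beta^{\frac{t-T}{pT}}\,\|\varphi-\omega\|.$$
   Context: $\|\cdot\|$ denotes the norm of $L^2(\mathbb{R})$. The Fourier transform is $\hat\psi(\xi)=\frac{1}{\sqrt{2\pi}}\int_{-\infty}^{\infty}\psi(x)e^{-i\xi x}\,dx$ (extended to $L^2(\mathbb{R})$ as a unitary map). Fix $T>0$, $p>1$, $\beta>0$. For $\psi\in L^2(\mathbb{R})$, the regularized solution $R_\beta\psi$ is the function $(x,t)\mapsto (R_\beta\psi)(x,t)$, $t\in[0,T]$, whose Fourier transform in $x$ is $$\widehat{(R_\beta\psi)}(\xi,t)=\frac{e^{-t\xi^2}}{\beta e^{(p-1)T\xi^2}+e^{-T\xi^2}}\,\hat\psi(\xi)=\frac{e^{(T-t)\xi^2}}{1+\beta e^{pT\xi^2}}\,\hat\psi(\xi).$$ *)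

theory Defs
  imports "HOL-Analysis.Analysis"
begin

definition L2 :: "(real \<Rightarrow> complex) \<Rightarrow> bool" where
  "L2 f \<longleftrightarrow> f \<in> borel_measurable lborel \<and> integrable lborel (\<lambda>x. (cmod (f x))\<^sup>2)"

definition L2norm :: "(real \<Rightarrow> complex) \<Rightarrow> real" where
  "L2norm f = sqrt (\<integral>x. (cmod (f x))\<^sup>2 \<partial>lborel)"

definition fourier_L1 :: "(real \<Rightarrow> complex) \<Rightarrow> real \<Rightarrow> complex" where
  "fourier_L1 f \<xi> = complex_of_real (1 / sqrt (2 * pi)) *
      (\<integral>x. f x * exp (- \<i> * complex_of_real (\<xi> * x)) \<partial>lborel)"

text \<open>The unitary L2 extension (Plancherel): g is the L2 Fourier transform of f
  iff the Fourier transforms of the truncations of f to [-n,n] converge to g in L2.\<close>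

definition fourier_L2 :: "(real \<Rightarrow> complex) \<Rightarrow> (real \<Rightarrow> complex) \<Rightarrow> bool" where
  "fourier_L2 f g \<longleftrightarrow> L2 f \<and> L2 g \<and>
     (\<lambda>n::nat. L2norm (\<lambda>\<xi>. fourier_L1 (\<lambda>x. indicator {- real n .. real n} x * f x) \<xi> - g \<xi>))
        \<longlonglongrightarrow> 0"

text \<open>W is the regularized solution R_beta psi: for each t in [0,T], the Fourier
  transform in x of W(.,t) is exp((T-t) xi^2)/(1 + beta exp(p T xi^2)) times that of psi.\<close>

definition reg_solution :: "real \<Rightarrow> real \<Rightarrow> real \<Rightarrow> (real \<Rightarrow> complex) \<Rightarrow> (real \<Rightarrow> real \<Rightarrow> complex) \<Rightarrow> bool" where
  "reg_solution T p \<beta> \<psi> W \<longleftrightarrow> (\<exists>\<psi>h. fourier_L2 \<psi> \<psi>h \<and>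
     (\<forall>t\<in>{0..T}. fourier_L2 (\<lambda>x. W x t)
        (\<lambda>\<xi>. complex_of_real (exp ((T - t) * \<xi>\<^sup>2) / (1 + \<beta> * exp (p * T * \<xi>\<^sup>2))) * \<psi>h \<xi>)))"

end

theory Submission
  imports Defs "HOL-Probability.Probability"
begin

(* In Fourier variables the regularised solution is the final value multiplied by
   m(xi) = exp((T-t) xi^2) / (1 + beta exp(pT xi^2)), and m <= beta^((t-T)/(pT)).
   Since the L2 Fourier transform is linear and an isometry (Plancherel), the
   estimate follows from  ||w-v|| = ||m (phi^ - omega^)|| <= sup m * ||phi^ - omega^||
   = sup m * ||phi - omega||. *)

definition energy :: "(real \<Rightarrow> complex) \<Rightarrow> ennreal" where
  "energy f = (\<integral>\<^sup>+x. ennreal ((cmod (f x))\<^sup>2) \<partial>lborel)"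

lemma L2norm_energy: "f \<in> borel_measurable borel \<Longrightarrow> L2norm f = sqrt (enn2real (energy f))"
  unfolding L2norm_def energy_def
  by (subst integral_eq_nn_integral) auto

lemma L2_iff_energy: "L2 f \<longleftrightarrow> f \<in> borel_measurable borel \<and> energy f < \<infinity>"
  unfolding L2_def energy_def integrable_iff_bounded by auto

lemma energy_Cauchy_Schwarz:
  assumes [measurable]: "f \<in> borel_measurable borel" "g \<in> borel_measurable borel"
  shows "(\<integral>\<^sup>+x. ennreal (cmod (f x) * cmod (g x)) \<partial>lborel)\<^sup>2 \<le> energy f * energy g"
proof -
  have "(\<integral>\<^sup>+x. ennreal (cmod (f x)) * ennreal (cmod (g x)) \<partial>lborel)\<^sup>2 \<le>
     (\<integral>\<^sup>+x. (ennreal (cmod (f x)))^2 \<partial>lborel) * (\<integral>\<^sup>+x. (ennreal (cmod (g x)))^2 \<partial>lborel)"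
    by (rule Cauchy_Schwarz_nn_integral) auto
  then show ?thesis unfolding energy_def by (simp add: ennreal_mult ennreal_power)
qed

lemma energy_diff_le:
  assumes [measurable]: "f \<in> borel_measurable borel" "g \<in> borel_measurable borel"
  shows "energy (\<lambda>x. f x - g x) \<le> 2 * energy f + 2 * energy g"
proof -
  have "energy (\<lambda>x. f x - g x) \<le> (\<integral>\<^sup>+x. ennreal (2 * (cmod (f x))\<^sup>2) + ennreal (2 * (cmod (g x))\<^sup>2) \<partial>lborel)"
    unfolding energy_def
  proof (intro nn_integral_mono)
    fix x
    have "(cmod (f x - g x))\<^sup>2 \<le> (cmod (f x) + cmod (g x))\<^sup>2"
      by (intro power_mono norm_triangle_ineq4) auto
    also have "\<dots> \<le> 2 * (cmod (f x))\<^sup>2 + 2 * (cmod (g x))\<^sup>2"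
      using zero_le_power2[of "cmod (f x) - cmod (g x)"] by (simp add: power2_eq_square algebra_simps)
    finally show "ennreal ((cmod (f x - g x))\<^sup>2) \<le> ennreal (2 * (cmod (f x))\<^sup>2) + ennreal (2 * (cmod (g x))\<^sup>2)"
      by (simp add: ennreal_plus[symmetric] del: ennreal_plus)
  qed
  also have "\<dots> = 2 * energy f + 2 * energy g" unfolding energy_def
    by (subst nn_integral_add) (auto simp: ennreal_mult nn_integral_cmult)
  finally show ?thesis .
qed

lemma energy_sum3_le:
  assumes [measurable]: "f \<in> borel_measurable borel" "g \<in> borel_measurable borel" "h \<in> borel_measurable borel"
  shows "energy (\<lambda>x. f x + g x + h x) \<le> 3 * energy f + 3 * energy g + 3 * energy h"
proof -
  have "energy (\<lambda>x. f x + g x + h x) \<le> (\<integral>\<^sup>+x. ennreal (3 * (cmod (f x))\<^sup>2) + ennreal (3 * (cmod (g x))\<^sup>2) + ennreal (3 * (cmod (h x))\<^sup>2) \<partial>lborel)"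
    unfolding energy_def
  proof (intro nn_integral_mono)
    fix x
    define a b c where "a = cmod (f x)" and "b = cmod (g x)" and "c = cmod (h x)"
    have "(cmod (f x + g x + h x))\<^sup>2 \<le> (a + b + c)\<^sup>2" unfolding a_def b_def c_def
      by (intro power_mono) (auto intro: order.trans[OF norm_triangle_ineq] add_mono)
    also have "\<dots> \<le> 3 * a\<^sup>2 + 3 * b\<^sup>2 + 3 * c\<^sup>2"
      using zero_le_power2[of "a - b"] zero_le_power2[of "b - c"] zero_le_power2[of "a - c"]
      by (simp add: power2_eq_square algebra_simps)
    finally show "ennreal ((cmod (f x + g x + h x))\<^sup>2) \<le> ennreal (3 * (cmod (f x))\<^sup>2) + ennreal (3 * (cmod (g x))\<^sup>2) + ennreal (3 * (cmod (h x))\<^sup>2)"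
      by (simp add: a_def b_def c_def ennreal_plus[symmetric] del: ennreal_plus)
  qed
  also have "\<dots> = 3 * energy f + 3 * energy g + 3 * energy h" unfolding energy_def
    by (subst nn_integral_add, simp, simp)+ (auto simp: ennreal_mult nn_integral_cmult)
  finally show ?thesis .
qed

lemma L2_diff: "L2 f \<Longrightarrow> L2 g \<Longrightarrow> L2 (\<lambda>x. f x - g x)"
  using energy_diff_le[of f g] unfolding L2_iff_energy
  by (auto simp: ennreal_mult_less_top intro: le_less_trans)

lemma energy_minus_commute: "energy (\<lambda>x. g x - f x) = energy (\<lambda>x. f x - g x)"
  by (simp add: energy_def norm_minus_commute)

lemma energy_translate: "f \<in> borel_measurable borel \<Longrightarrow> energy (\<lambda>y. f (y + u)) = energy f"
  unfolding energy_def
  using nn_integral_real_affine[of "\<lambda>x. ennreal ((cmod (f x))\<^sup>2)" 1 u]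
  by (simp add: add.commute)

text \<open>Translation is continuous in energy for a continuous function vanishing outside \<open>[-R,R]\<close>:
  a uniform-continuity estimate on a compact interval.\<close>

lemma translate_continuous_compact_support:
  fixes g :: "real \<Rightarrow> complex"
  assumes cg: "continuous_on UNIV g" and R: "R \<ge> 0" and supp: "\<And>x. R < \<bar>x\<bar> \<Longrightarrow> g x = 0"
    and e: "e > 0"
  shows "\<exists>d>0. \<forall>u. \<bar>u\<bar> < d \<longrightarrow> energy (\<lambda>y. g (y + u) - g y) \<le> ennreal e"
proof -
  define \<eta> where "\<eta> = sqrt (e / (2*R+2))"
  have \<eta>: "\<eta> > 0" using e R by (simp add: \<eta>_def)
  have \<eta>2: "\<eta>^2 * (2*R+2) = e" using e R by (simp add: \<eta>_def)
  have "uniformly_continuous_on {-R-2..R+2} g"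
    by (rule compact_uniformly_continuous) (auto intro: continuous_on_subset[OF cg])
  then obtain d0 where d0: "d0 > 0" and
    d0': "\<And>x x'. x \<in> {-R-2..R+2} \<Longrightarrow> x' \<in> {-R-2..R+2} \<Longrightarrow> dist x' x < d0 \<Longrightarrow> dist (g x') (g x) < \<eta>"
    unfolding uniformly_continuous_on_def using \<eta> by metis
  have [measurable]: "g \<in> borel_measurable borel"
    using cg by (rule borel_measurable_continuous_onI)
  show ?thesis
  proof (intro exI[of _ "min d0 1"] conjI allI impI)
    show "min d0 1 > 0" using d0 by simp
    fix u :: real assume u: "\<bar>u\<bar> < min d0 1"
    have pt: "ennreal ((cmod (g (y + u) - g y))\<^sup>2) \<le> ennreal (\<eta>^2) * indicator {-R-1..R+1} y" for y
    proof (cases "y \<in> {-R-1..R+1}")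
      case True
      then have "dist (g (y+u)) (g y) < \<eta>"
        using u by (intro d0') (auto simp: dist_real_def)
      then have "(cmod (g (y + u) - g y))\<^sup>2 \<le> \<eta>^2"
        by (intro power_mono) (auto simp: dist_norm)
      then show ?thesis using True by simp
    next
      case False
      then have "R < \<bar>y\<bar>" "R < \<bar>y+u\<bar>" using u by auto
      then show ?thesis using supp by simp
    qed
    have "energy (\<lambda>y. g (y + u) - g y) \<le> (\<integral>\<^sup>+y. ennreal (\<eta>^2) * indicator {-R-1..R+1} y \<partial>lborel)"
      unfolding energy_def by (intro nn_integral_mono pt)
    also have "\<dots> = ennreal (\<eta>^2) * ennreal (2*R+2)"
      using R by (simp add: nn_integral_cmult)
    also have "\<dots> = ennreal (\<eta>^2 * (2*R+2))" by (rule ennreal_mult[symmetric]) (use R in auto)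
    also have "\<dots> = ennreal e" using \<eta>2 by simp
    finally show "energy (\<lambda>y. g (y + u) - g y) \<le> ennreal e" .
  qed
qed

text \<open>Composing with them keeps
  continuity and turns any function into a bounded compactly supported one.\<close>

definition clip :: "real \<Rightarrow> complex \<Rightarrow> complex" where
  "clip M z = z / complex_of_real (max 1 (cmod z / M))"

definition bump :: "real \<Rightarrow> real \<Rightarrow> real" where
  "bump M x = max 0 (min 1 (M + 1 - \<bar>x\<bar>))"

lemma clip_cont: "M > 0 \<Longrightarrow> continuous_on UNIV (clip M)"
  unfolding clip_def by (intro continuous_intros) auto

lemma bump_cont: "continuous_on UNIV (bump M)"
  unfolding bump_def by (intro continuous_intros)

lemma clip_norm: "M > 0 \<Longrightarrow> cmod (clip M z) \<le> M"
  unfolding clip_def norm_divide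
  by (auto simp: max_def field_simps)

lemma clip_id: "M > 0 \<Longrightarrow> cmod z \<le> M \<Longrightarrow> clip M z = z"
  unfolding clip_def by (auto simp: max_def field_simps)

lemma bump_01: "0 \<le> bump M x" "bump M x \<le> 1"
  unfolding bump_def by auto

lemma bump_one: "\<bar>x\<bar> \<le> M \<Longrightarrow> bump M x = 1"
  unfolding bump_def by auto

lemma bump_zero: "M + 1 \<le> \<bar>x\<bar> \<Longrightarrow> bump M x = 0"
  unfolding bump_def by auto

lemma clip_bump_norm: "M > 0 \<Longrightarrow> cmod (clip M z * bump M x) \<le> M"
  using clip_norm[of M z] bump_01[of M x]
  by (simp add: norm_mult mult_le_one order.trans[OF mult_right_le_one_le])

lemma clip_bump_le: "M > 0 \<Longrightarrow> cmod (z - clip M z * bump M x) \<le> cmod z"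
proof -
  assume M: "M > 0"
  define c where "c = bump M x / max 1 (cmod z / M)"
  have c: "0 \<le> c" "c \<le> 1" unfolding c_def using bump_01[of M x]
    by (auto simp: max_def field_simps)
  have "z - clip M z * bump M x = z * complex_of_real (1 - c)"
    unfolding clip_def c_def by (simp add: field_simps)
  moreover have "cmod (z * complex_of_real (1-c)) = cmod z * (1-c)"
    using c by (simp add: norm_mult del: of_real_diff)
  moreover have "cmod z * (1-c) \<le> cmod z" using c by (simp add: mult_left_le)
  ultimately show ?thesis by simp
qed

lemma energy_dominated_small:
  fixes s :: "nat \<Rightarrow> real \<Rightarrow> complex" and w :: "real \<Rightarrow> real"
  assumes [measurable]: "\<And>n. s n \<in> borel_measurable borel" and [measurable]: "w \<in> borel_measurable borel"
    and wf: "(\<integral>\<^sup>+x. ennreal (w x) \<partial>lborel) < \<infinity>"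
    and bd: "\<And>n. AE x in lborel. (cmod (s n x))\<^sup>2 \<le> w x"
    and lim: "AE x in lborel. (\<lambda>n. s n x) \<longlonglongrightarrow> 0"
    and e: "e > 0"
  shows "\<exists>n. energy (s n) < ennreal e"
proof -
  have "(\<lambda>n. \<integral>\<^sup>+x. ennreal ((cmod (s n x))\<^sup>2) \<partial>lborel) \<longlonglongrightarrow> (\<integral>\<^sup>+x. 0 \<partial>(lborel::real measure))"
  proof (rule nn_integral_dominated_convergence[where w="\<lambda>x. ennreal (w x)"])
    show "AE x in lborel. ennreal ((cmod (s j x))\<^sup>2) \<le> ennreal (w x)" for j
      using bd[of j] by eventually_elim (rule ennreal_leI)
    show "AE x in lborel. (\<lambda>i. ennreal ((cmod (s i x))\<^sup>2)) \<longlonglongrightarrow> 0"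
      using lim
    proof eventually_elim
      case (elim x)
      have "(\<lambda>i. ennreal ((cmod (s i x))\<^sup>2)) \<longlonglongrightarrow> ennreal ((cmod (0::complex))\<^sup>2)"
        by (intro tendsto_ennrealI tendsto_intros elim)
      then show ?case by simp
    qed
  qed (use wf in auto)
  then have "(\<lambda>n. energy (s n)) \<longlonglongrightarrow> 0" by (simp add: energy_def)
  then have "eventually (\<lambda>n. energy (s n) < ennreal e) sequentially"
    using e by (intro order_tendstoD) auto
  then show ?thesis by (auto dest: eventually_happens)
qed

lemma L2_clip_bump_approx:
  assumes h: "L2 h" and e: "e > 0"
  shows "\<exists>M>0. energy (\<lambda>x. h x - clip M (h x) * bump M x) < ennreal e"
proof -
  have [measurable]: "h \<in> borel_measurable borel" using h by (simp add: L2_iff_energy)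
  define k where "k = (\<lambda>n x. h x - clip (real n + 1) (h x) * bump (real n + 1) x)"
  have [measurable]: "k n \<in> borel_measurable borel" for n
    unfolding k_def using borel_measurable_continuous_onI[OF clip_cont[of "real n + 1"]]
      borel_measurable_continuous_onI[OF bump_cont[of "real n + 1"]] by measurable
  have "\<exists>n. energy (k n) < ennreal e"
  proof (rule energy_dominated_small[where w="\<lambda>x. (cmod (h x))\<^sup>2"])
    show "AE x in lborel. (cmod (k n x))\<^sup>2 \<le> (cmod (h x))\<^sup>2" for n
      unfolding k_def by (intro AE_I2 power_mono clip_bump_le) auto
    show "AE x in lborel. (\<lambda>n. k n x) \<longlonglongrightarrow> 0"
    proof (intro AE_I2 tendsto_eventually)
      fix x
      obtain N :: nat where N: "max (cmod (h x)) \<bar>x\<bar> \<le> real N" using real_arch_simple by blast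
      show "\<forall>\<^sub>F n in sequentially. k n x = 0"
        unfolding eventually_sequentially
        using N by (intro exI[of _ N] allI impI) (auto simp: k_def clip_id bump_one)
    qed
  qed (use h e in \<open>auto simp: L2_iff_energy energy_def\<close>)
  then obtain n where "energy (k n) < ennreal e" by blast
  then show ?thesis unfolding k_def by (intro exI[of _ "real n + 1"]) auto
qed

lemma clip_bump_diff_bound:
  assumes M: "M > 0"
  shows "(cmod (clip M z * bump M x - clip M z' * bump M x))\<^sup>2 \<le> (2*M)\<^sup>2 * indicator {-M-1..M+1} x"
proof (cases "x \<in> {-M-1..M+1}")
  case True
  have "cmod (clip M z * bump M x - clip M z' * bump M x) \<le> M + M"
    using clip_bump_norm[OF M] by (intro order.trans[OF norm_triangle_ineq4] add_mono)
  then have "(cmod (clip M z * bump M x - clip M z' * bump M x))\<^sup>2 \<le> (2*M)\<^sup>2"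
    by (intro power_mono) auto
  then show ?thesis using True by simp
next
  case False
  then have "bump M x = 0" by (intro bump_zero) auto
  then show ?thesis using False by simp
qed

lemma borel_ae_continuous_limit:
  fixes h :: "real \<Rightarrow> 'b::euclidean_space"
  assumes "h \<in> borel_measurable borel"
  obtains g where "\<And>n. continuous_on UNIV (g n)" and "AE x in lborel. (\<lambda>n. g n x) \<longlonglongrightarrow> h x"
proof -
  have "h \<in> borel_measurable lebesgue" using assms by (intro measurable_completion) simp
  then have "h measurable_on UNIV" by (rule lebesgue_measurable_imp_measurable_on) simp
  then obtain N g where N: "negligible N" and gc: "\<And>n. continuous_on UNIV (g n)"
    and gl: "\<And>x. x \<notin> N \<Longrightarrow> (\<lambda>n. g n x) \<longlonglongrightarrow> h x"
    unfolding measurable_on_def by auto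
  have "AE x in lebesgue. x \<notin> N"
    using N unfolding negligible_iff_null_sets by (rule AE_not_in)
  then have "AE x in lborel. x \<notin> N" by (simp add: AE_completion_iff)
  then have "AE x in lborel. (\<lambda>n. g n x) \<longlonglongrightarrow> h x" by eventually_elim (rule gl)
  with gc show thesis by (rule that)
qed

lemma measurable_continuous_approx:
  assumes hm[measurable]: "h \<in> borel_measurable borel" and M: "M > 0" and e: "e > 0"
  shows "\<exists>g. continuous_on UNIV g \<and>
           energy (\<lambda>x. clip M (g x) * bump M x - clip M (h x) * bump M x) < ennreal e"
proof -
  obtain g where gc: "\<And>n. continuous_on UNIV (g n)" and gl: "AE x in lborel. (\<lambda>n. g n x) \<longlonglongrightarrow> h x"
    using borel_ae_continuous_limit[OF hm] by blast
  have [measurable]: "g n \<in> borel_measurable borel" for n using gc by (rule borel_measurable_continuous_onI)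
  have [measurable]: "clip M \<in> borel_measurable borel" "bump M \<in> borel_measurable borel"
    using clip_cont[OF M] bump_cont by (auto intro: borel_measurable_continuous_onI)
  define s where "s = (\<lambda>n x. clip M (g n x) * bump M x - clip M (h x) * bump M x)"
  have "\<exists>n. energy (s n) < ennreal e"
  proof (rule energy_dominated_small[where w="\<lambda>x. (2*M)^2 * indicator {-M-1..M+1} x"])
    show "AE x in lborel. (cmod (s n x))\<^sup>2 \<le> (2*M)^2 * indicator {-M-1..M+1} x" for n
      unfolding s_def using clip_bump_diff_bound[OF M] by simp
    show "AE x in lborel. (\<lambda>n. s n x) \<longlonglongrightarrow> 0"
      using gl
    proof eventually_elim
      case (elim x)
      have "isCont (clip M) (h x)"
        using clip_cont[OF M] by (simp add: continuous_on_eq_continuous_at)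
      then have "(\<lambda>n. clip M (g n x)) \<longlonglongrightarrow> clip M (h x)"
        using elim by (rule isCont_tendsto_compose)
      then have "(\<lambda>n. s n x) \<longlonglongrightarrow> clip M (h x) * bump M x - clip M (h x) * bump M x"
        unfolding s_def by (intro tendsto_intros)
      then show ?case by simp
    qed
    show "(\<integral>\<^sup>+x. ennreal ((2*M)^2 * indicator {-M-1..M+1} x) \<partial>lborel) < \<infinity>"
      using M by (simp add: ennreal_mult' nn_integral_cmult ennreal_indicator ennreal_mult_less_top)
  qed (use e in \<open>auto simp: s_def\<close>)
  then show ?thesis using gc unfolding s_def by blast
qed

lemma compact_continuous_dense_L2:
  assumes h: "L2 h" and e: "e > 0"
  shows "\<exists>g R. continuous_on UNIV g \<and> R \<ge> 0 \<and> (\<forall>x. R < \<bar>x\<bar> \<longrightarrow> g x = 0) \<and>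
           energy (\<lambda>x. h x - g x) < ennreal e"
proof -
  have hm[measurable]: "h \<in> borel_measurable borel" using h by (simp add: L2_iff_energy)
  obtain M where M: "M > 0" and hk: "energy (\<lambda>x. h x - clip M (h x) * bump M x) < ennreal (e/8)"
    using L2_clip_bump_approx[OF h, of "e/8"] e by auto
  obtain g where gc: "continuous_on UNIV g"
    and kq: "energy (\<lambda>x. clip M (g x) * bump M x - clip M (h x) * bump M x) < ennreal (e/8)"
    using measurable_continuous_approx[OF hm M, of "e/8"] e by auto
  have [measurable]: "g \<in> borel_measurable borel" "clip M \<in> borel_measurable borel"
    "bump M \<in> borel_measurable borel"
    using gc clip_cont[OF M] bump_cont by (auto intro: borel_measurable_continuous_onI)
  define q where "q = (\<lambda>x. clip M (g x) * bump M x)"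
  show ?thesis
  proof (intro exI conjI allI impI)
    show "continuous_on UNIV q" unfolding q_def
      by (intro continuous_on_mult continuous_on_compose2[OF clip_cont[OF M] gc]
          continuous_on_of_real continuous_on_compose2[OF continuous_on_of_real bump_cont]) auto
    show "0 \<le> M + 1" using M by simp
    show "q x = 0" if "M + 1 < \<bar>x\<bar>" for x using that by (simp add: q_def bump_zero)
    have "energy (\<lambda>x. h x - q x)
        = energy (\<lambda>x. (h x - clip M (h x) * bump M x) - (clip M (g x) * bump M x - clip M (h x) * bump M x))"
      unfolding q_def by (simp add: algebra_simps)
    also have "\<dots> \<le> 2 * energy (\<lambda>x. h x - clip M (h x) * bump M x)
                   + 2 * energy (\<lambda>x. clip M (g x) * bump M x - clip M (h x) * bump M x)"
      by (rule energy_diff_le) auto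
    also have "\<dots> \<le> 2 * ennreal (e/8) + 2 * ennreal (e/8)"
      using hk kq by (intro add_mono mult_left_mono) auto
    also have "\<dots> = ennreal (2*(e/8)) + ennreal (2*(e/8))" using e by (simp only: ennreal_mult) simp
    also have "\<dots> = ennreal (e/2)" using e by (subst ennreal_plus[symmetric]) auto
    also have "\<dots> < ennreal e" using e by (simp add: ennreal_lessI)
    finally show "energy (\<lambda>x. h x - q x) < ennreal e" .
  qed
qed

text \<open>Continuity of translation in L2: \<open>energy (h(\<cdot>+u) - h) \<rightarrow> 0\<close> as \<open>u \<rightarrow> 0\<close>, by approximating
  \<open>h\<close> with a continuous compactly supported function.\<close>

lemma translate_continuous_L2:
  assumes h: "L2 h" and e: "e > 0"
  shows "\<exists>d>0. \<forall>u. \<bar>u\<bar> < d \<longrightarrow> energy (\<lambda>y. h (y + u) - h y) \<le> ennreal e"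
proof -
  have [measurable]: "h \<in> borel_measurable borel" using h by (simp add: L2_iff_energy)
  obtain g R where gc: "continuous_on UNIV g" and R: "R \<ge> 0" and gs: "\<And>x. R < \<bar>x\<bar> \<Longrightarrow> g x = 0"
    and hg: "energy (\<lambda>x. h x - g x) < ennreal (e/9)"
    using compact_continuous_dense_L2[OF h, of "e/9"] e by auto
  have [measurable]: "g \<in> borel_measurable borel" using gc by (rule borel_measurable_continuous_onI)
  obtain d where d: "d > 0" and dg: "\<And>u. \<bar>u\<bar> < d \<Longrightarrow> energy (\<lambda>y. g (y + u) - g y) \<le> ennreal (e/9)"
    using translate_continuous_compact_support[OF gc R gs, of "e/9"] e by auto
  show ?thesis
  proof (intro exI conjI allI impI)
    show "d > 0" by fact
    fix u :: real assume u: "\<bar>u\<bar> < d"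
    have "energy (\<lambda>y. h (y + u) - h y) = energy (\<lambda>y. (h (y + u) - g (y + u)) + (g (y + u) - g y) + (g y - h y))"
      by (simp add: algebra_simps)
    also have "\<dots> \<le> 3 * energy (\<lambda>y. h (y + u) - g (y + u)) + 3 * energy (\<lambda>y. g (y + u) - g y) + 3 * energy (\<lambda>y. g y - h y)"
      by (rule energy_sum3_le) auto
    also have "energy (\<lambda>y. h (y + u) - g (y + u)) = energy (\<lambda>x. h x - g x)"
      by (rule energy_translate[of "\<lambda>x. h x - g x"]) auto
    also have "energy (\<lambda>y. g y - h y) = energy (\<lambda>x. h x - g x)"
      by (rule energy_minus_commute)
    also have "3 * energy (\<lambda>x. h x - g x) + 3 * energy (\<lambda>y. g (y + u) - g y) + 3 * energy (\<lambda>x. h x - g x)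
        \<le> 3 * ennreal (e/9) + 3 * ennreal (e/9) + 3 * ennreal (e/9)"
      using hg dg[OF u] by (intro add_mono mult_left_mono) auto
    also have "\<dots> = ennreal (3*(e/9)) + ennreal (3*(e/9)) + ennreal (3*(e/9))"
      using e by (simp only: ennreal_mult) simp
    also have "\<dots> = ennreal e" using e by (simp add: ennreal_plus[symmetric] del: ennreal_plus)
    finally show "energy (\<lambda>y. h (y + u) - h y) \<le> ennreal e" .
  qed
qed

lemma energy_product_bound:
  assumes [measurable]: "f \<in> borel_measurable borel" "g \<in> borel_measurable borel"
    and ff: "energy f < \<infinity>" and gf: "energy g < \<infinity>"
  shows "(\<integral>\<^sup>+x. ennreal (cmod (f x) * cmod (g x)) \<partial>lborel) < \<infinity>"
    and "enn2real (\<integral>\<^sup>+x. ennreal (cmod (f x) * cmod (g x)) \<partial>lborel)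
           \<le> sqrt (enn2real (energy f) * enn2real (energy g))"
proof -
  define X where "X = (\<integral>\<^sup>+x. ennreal (cmod (f x) * cmod (g x)) \<partial>lborel)"
  have X2: "X^2 \<le> energy f * energy g" unfolding X_def by (rule energy_Cauchy_Schwarz) auto
  have fg: "energy f * energy g < \<infinity>" using ff gf by (simp add: ennreal_mult_less_top)
  then have "X^2 < \<infinity>" using X2 by (rule le_less_trans[rotated])
  then show "X < \<infinity>" by (simp add: power_less_top_ennreal)
  show "enn2real X \<le> sqrt (enn2real (energy f) * enn2real (energy g))"
  proof (rule real_le_rsqrt)
    have "(enn2real X)^2 = enn2real (X^2)" by (simp add: power2_eq_square enn2real_mult)
    also have "\<dots> \<le> enn2real (energy f * energy g)"
      using X2 fg by (intro enn2real_mono) auto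
    also have "\<dots> = enn2real (energy f) * enn2real (energy g)" by (simp add: enn2real_mult)
    finally show "(enn2real X)^2 \<le> enn2real (energy f) * enn2real (energy g)" .
  qed
qed

lemma cnj_measurable[measurable]: "cnj \<in> borel_measurable borel"
  by (intro borel_measurable_continuous_onI continuous_intros)

lemma inner_product_bound:
  assumes [measurable]: "f \<in> borel_measurable borel" "g \<in> borel_measurable borel"
    and "energy f < \<infinity>" "energy g < \<infinity>"
  shows "integrable lborel (\<lambda>y. f y * cnj (g y))"
    and "cmod (\<integral>y. f y * cnj (g y) \<partial>lborel) \<le> sqrt (enn2real (energy f) * enn2real (energy g))"
proof -
  note X = energy_product_bound[OF assms]
  show "integrable lborel (\<lambda>y. f y * cnj (g y))"
    unfolding integrable_iff_bounded using X(1) by (simp add: norm_mult)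
  have "cmod (\<integral>y. f y * cnj (g y) \<partial>lborel) \<le> (\<integral>y. cmod (f y * cnj (g y)) \<partial>lborel)"
    by (rule integral_norm_bound)
  also have "\<dots> = enn2real (\<integral>\<^sup>+x. ennreal (cmod (f x) * cmod (g x)) \<partial>lborel)"
    by (subst integral_eq_nn_integral) (auto simp: norm_mult)
  finally show "cmod (\<integral>y. f y * cnj (g y) \<partial>lborel) \<le> sqrt (enn2real (energy f) * enn2real (energy g))"
    using X(2) by linarith
qed

text \<open>The autocorrelation of \<open>h\<close>; its value at 0 is the energy, and its Fourier transform
  will turn out to be \<open>|h^|^2\<close>.\<close>

definition autocorr :: "(real \<Rightarrow> complex) \<Rightarrow> real \<Rightarrow> complex" where
  "autocorr h u = (\<integral>y. h (y + u) * cnj (h y) \<partial>lborel)"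

lemma autocorr_at_0:
  assumes [measurable]: "h \<in> borel_measurable borel"
  shows "autocorr h 0 = complex_of_real (enn2real (energy h))"
proof -
  have "autocorr h 0 = (\<integral>y. complex_of_real ((cmod (h y))\<^sup>2) \<partial>lborel)"
    unfolding autocorr_def by (intro Bochner_Integration.integral_cong) (auto simp: complex_mult_cnj cmod_power2)
  also have "\<dots> = complex_of_real (\<integral>y. (cmod (h y))\<^sup>2 \<partial>lborel)" by (rule integral_complex_of_real)
  also have "(\<integral>y. (cmod (h y))\<^sup>2 \<partial>lborel) = enn2real (energy h)"
    unfolding energy_def by (subst integral_eq_nn_integral) auto
  finally show ?thesis .
qed

lemma autocorr_bound:
  assumes h: "L2 h"
  shows "integrable lborel (\<lambda>y. h (y + u) * cnj (h y))" "cmod (autocorr h u) \<le> enn2real (energy h)"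
proof -
  have [measurable]: "h \<in> borel_measurable borel" and hf: "energy h < \<infinity>"
    using h by (auto simp: L2_iff_energy)
  have s: "energy (\<lambda>y. h (y + u)) = energy h" by (rule energy_translate) simp
  show "integrable lborel (\<lambda>y. h (y + u) * cnj (h y))"
    by (rule inner_product_bound(1)) (use hf s in auto)
  have "cmod (autocorr h u) \<le> sqrt (enn2real (energy (\<lambda>y. h (y + u))) * enn2real (energy h))"
    unfolding autocorr_def by (rule inner_product_bound(2)) (use hf s in auto)
  also have "\<dots> = enn2real (energy h)" by (simp add: s)
  finally show "cmod (autocorr h u) \<le> enn2real (energy h)" .
qed

text \<open>The increment of the autocorrelation is the inner product of \<open>h(\<cdot>+u) - h\<close> with \<open>h\<close>.\<close>

lemma autocorr_increment_bound:
  assumes h: "L2 h"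
  shows "cmod (autocorr h u - autocorr h 0)
           \<le> sqrt (enn2real (energy (\<lambda>y. h (y + u) - h y)) * enn2real (energy h))"
proof -
  have [measurable]: "h \<in> borel_measurable borel" and hf: "energy h < \<infinity>"
    using h by (auto simp: L2_iff_energy)
  have "energy (\<lambda>y. h (y + u) - h y) < \<infinity>"
    using L2_diff[OF _ h, of "\<lambda>y. h (y + u)"] hf energy_translate[of h u]
    by (simp add: L2_iff_energy)
  moreover have "autocorr h u - autocorr h 0 = (\<integral>y. (h (y + u) - h y) * cnj (h y) \<partial>lborel)"
    unfolding autocorr_def left_diff_distrib
    using Bochner_Integration.integral_diff[OF autocorr_bound(1)[OF h, of u] autocorr_bound(1)[OF h, of 0]]
    by simp
  ultimately show ?thesis using inner_product_bound(2)[of "\<lambda>y. h (y + u) - h y" h] hf by simp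
qed

text \<open>Continuity of translation makes the autocorrelation continuous at 0.\<close>

lemma autocorr_continuous_at_0:
  assumes h: "L2 h"
  shows "isCont (autocorr h) 0"
  unfolding isCont_def LIM_def
proof (intro allI impI)
  fix r :: real assume r: "r > 0"
  define c where "c = enn2real (energy h) + 1"
  have c: "c > 0" unfolding c_def using enn2real_nonneg[of "energy h"] by linarith
  obtain d where d: "d > 0"
    and dd: "\<And>u. \<bar>u\<bar> < d \<Longrightarrow> energy (\<lambda>y. h (y + u) - h y) \<le> ennreal (r^2 / (2*c))"
    using translate_continuous_L2[OF h, of "r^2/(2*c)"] r c by auto
  show "\<exists>s>0. \<forall>u. u \<noteq> 0 \<and> dist u 0 < s \<longrightarrow> dist (autocorr h u) (autocorr h 0) < r"
  proof (intro exI conjI allI impI)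
    fix u :: real assume "u \<noteq> 0 \<and> dist u 0 < d"
    then have du: "\<bar>u\<bar> < d" by simp
    have "cmod (autocorr h u - autocorr h 0) \<le> sqrt ((r^2 / (2*c)) * c)"
    proof (rule order.trans[OF autocorr_increment_bound[OF h]], intro real_sqrt_le_mono mult_mono)
      show "enn2real (energy (\<lambda>y. h (y + u) - h y)) \<le> r^2 / (2*c)"
        using dd[OF du] r c by (simp add: enn2real_leI)
    qed (use r c in \<open>auto simp: c_def\<close>)
    also have "\<dots> = r / sqrt 2" using c r by (simp add: real_sqrt_divide)
    also have "\<dots> < r" using r by (simp add: divide_less_eq)
    finally show "dist (autocorr h u) (autocorr h 0) < r" by (simp add: dist_norm)
  qed (rule d)
qed

lemma integrable_autocorr_integrand:
  fixes h :: "real \<Rightarrow> complex" and k :: "real \<times> real \<Rightarrow> complex"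
  assumes hi: "integrable lborel h" and [measurable]: "h \<in> borel_measurable borel"
    and [measurable]: "k \<in> borel_measurable (lborel \<Otimes>\<^sub>M lborel)" and kb: "\<And>z. cmod (k z) \<le> 1"
  shows "integrable (lborel \<Otimes>\<^sub>M lborel) (\<lambda>(y,u). h (y + u) * cnj (h y) * k (y,u))"
proof -
  define L where "L = (\<integral>\<^sup>+u. ennreal (cmod (h u)) \<partial>lborel)"
  have L: "L < \<infinity>" using hi unfolding L_def integrable_iff_bounded by simp
  have shift: "(\<integral>\<^sup>+u. ennreal (cmod (h (y + u))) \<partial>lborel) = L" for y
    using nn_integral_real_affine[of "\<lambda>u. ennreal (cmod (h u))" 1 y] by (simp add: L_def)
  have "(\<integral>\<^sup>+z. ennreal (norm ((\<lambda>(y,u). h (y + u) * cnj (h y) * k (y,u)) z)) \<partial>(lborel \<Otimes>\<^sub>M lborel))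
      \<le> (\<integral>\<^sup>+z. ennreal (cmod (h (fst z + snd z)) * cmod (h (fst z))) \<partial>(lborel \<Otimes>\<^sub>M lborel))"
    using kb by (intro nn_integral_mono ennreal_leI)
      (auto simp: norm_mult split: prod.splits intro!: mult_left_le)
  also have "\<dots> = (\<integral>\<^sup>+y. \<integral>\<^sup>+u. ennreal (cmod (h (y + u))) * ennreal (cmod (h y)) \<partial>lborel \<partial>lborel)"
    by (subst lborel.nn_integral_fst[symmetric]) (auto simp: ennreal_mult)
  also have "\<dots> = (\<integral>\<^sup>+y. L * ennreal (cmod (h y)) \<partial>lborel)"
    by (intro nn_integral_cong) (simp add: nn_integral_multc shift)
  also have "\<dots> = L * L" unfolding L_def by (subst nn_integral_cmult) auto
  also have "\<dots> < \<infinity>" using L by (simp add: ennreal_mult_less_top)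
  finally show ?thesis unfolding integrable_iff_bounded by auto
qed

lemma integrable_tensor_dominated:
  fixes a b :: "real \<Rightarrow> real" and F :: "real \<times> real \<Rightarrow> complex"
  assumes ai: "integrable lborel a" and bi: "integrable lborel b"
    and [measurable]: "F \<in> borel_measurable (lborel \<Otimes>\<^sub>M lborel)"
    and Fb: "\<And>x y. cmod (F (x,y)) \<le> \<bar>a x\<bar> * \<bar>b y\<bar>"
  shows "integrable (lborel \<Otimes>\<^sub>M lborel) F"
proof -
  have [measurable]: "a \<in> borel_measurable borel" "b \<in> borel_measurable borel"
    using ai bi by (auto dest: borel_measurable_integrable)
  define La where "La = (\<integral>\<^sup>+x. ennreal \<bar>a x\<bar> \<partial>lborel)"
  define Lb where "Lb = (\<integral>\<^sup>+y. ennreal \<bar>b y\<bar> \<partial>lborel)"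
  have La: "La < \<infinity>" using ai unfolding La_def integrable_iff_bounded by simp
  have Lb: "Lb < \<infinity>" using bi unfolding Lb_def integrable_iff_bounded by simp
  have "(\<integral>\<^sup>+z. ennreal (norm (F z)) \<partial>(lborel \<Otimes>\<^sub>M lborel))
      \<le> (\<integral>\<^sup>+z. ennreal (\<bar>a (fst z)\<bar> * \<bar>b (snd z)\<bar>) \<partial>(lborel \<Otimes>\<^sub>M lborel))"
    using Fb by (intro nn_integral_mono ennreal_leI) (metis prod.collapse)
  also have "\<dots> = (\<integral>\<^sup>+x. \<integral>\<^sup>+y. ennreal \<bar>a x\<bar> * ennreal \<bar>b y\<bar> \<partial>lborel \<partial>lborel)"
    by (subst lborel.nn_integral_fst[symmetric]) (auto simp: ennreal_mult)
  also have "\<dots> = (\<integral>\<^sup>+x. ennreal \<bar>a x\<bar> * Lb \<partial>lborel)"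
    unfolding Lb_def by (intro nn_integral_cong) (simp add: nn_integral_cmult)
  also have "\<dots> = La * Lb" unfolding La_def by (subst nn_integral_multc) auto
  also have "\<dots> < \<infinity>" using La Lb by (simp add: ennreal_mult_less_top)
  finally show ?thesis unfolding integrable_iff_bounded by auto
qed

lemma autocorr_integrable:
  assumes hi: "integrable lborel h" and hm[measurable]: "h \<in> borel_measurable borel"
  shows "integrable lborel (autocorr h)"
proof -
  have "integrable (lborel \<Otimes>\<^sub>M lborel) (\<lambda>(y,u). h (y + u) * cnj (h y) * 1)"
    using integrable_autocorr_integrand[OF hi hm, of "\<lambda>_. 1"] by simp
  then have "integrable (lborel \<Otimes>\<^sub>M lborel) (\<lambda>(u,y). h (y + u) * cnj (h y))"
    by (subst (asm) lborel_pair.integrable_product_swap_iff[symmetric]) (simp add: case_prod_beta)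
  then have "integrable lborel (\<lambda>u. \<integral>y. (\<lambda>(u,y). h (y + u) * cnj (h y)) (u,y) \<partial>lborel)"
    by (rule lborel_pair.integrable_fst')
  then show ?thesis unfolding autocorr_def by simp
qed

definition fkernel :: "real \<Rightarrow> real \<Rightarrow> complex" where
  "fkernel \<xi> x = exp (- \<i> * complex_of_real (\<xi> * x))"

lemma fkernel_measurable[measurable]: "(\<lambda>x. fkernel \<xi> x) \<in> borel_measurable borel"
  unfolding fkernel_def by (intro borel_measurable_continuous_onI continuous_intros)

lemma fkernel_measurable2[measurable]: "(\<lambda>z. fkernel (fst z) (snd z)) \<in> borel_measurable (lborel \<Otimes>\<^sub>M lborel)"
  unfolding fkernel_def by measurable

lemma norm_fkernel[simp]: "cmod (fkernel \<xi> x) = 1"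
proof -
  have "- \<i> * complex_of_real (\<xi> * x) = \<i> * complex_of_real (- (\<xi> * x))" by simp
  then show ?thesis unfolding fkernel_def by (simp only: norm_exp_i_times)
qed

lemma fkernel_shift: "fkernel \<xi> (y + u) * cnj (fkernel \<xi> y) = fkernel \<xi> u"
  unfolding fkernel_def exp_cnj exp_add[symmetric] by (simp add: algebra_simps)

lemma fourier_L1_fkernel:
  "fourier_L1 h \<xi> = complex_of_real (1 / sqrt (2 * pi)) * (\<integral>x. h x * fkernel \<xi> x \<partial>lborel)"
  unfolding fourier_L1_def fkernel_def ..

text \<open>The substitution \<open>x = y + u\<close> in the transform, multiplied by the conjugate of the
  integrand at \<open>y\<close>: the two kernels combine into \<open>fkernel \<xi> u\<close>.\<close>

lemma fourier_integral_shift: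
  "(\<integral>x. h x * fkernel \<xi> x \<partial>lborel) * cnj (h y * fkernel \<xi> y)
     = (\<integral>u. h (y + u) * cnj (h y) * fkernel \<xi> u \<partial>lborel)"
proof -
  have "(\<integral>x. h x * fkernel \<xi> x \<partial>lborel) = (\<integral>u. h (y + u) * fkernel \<xi> (y + u) \<partial>lborel)"
    using lborel_integral_real_affine[of 1 "\<lambda>x. h x * fkernel \<xi> x" y] by simp
  then have "(\<integral>x. h x * fkernel \<xi> x \<partial>lborel) * cnj (h y * fkernel \<xi> y)
      = (\<integral>u. h (y + u) * cnj (h y) * (fkernel \<xi> (y + u) * cnj (fkernel \<xi> y)) \<partial>lborel)"
    by (simp add: ac_simps)
  then show ?thesis by (simp only: fkernel_shift)
qed

text \<open>Wiener--Khinchin: for integrable \<open>h\<close>, \<open>|h^(\<xi>)|^2\<close> is \<open>1/(2\<pi>)\<close> times the transform of the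
  autocorrelation (up to the normalisation), by the substitution above and Fubini.\<close>

lemma fourier_sq_autocorr:
  assumes hi: "integrable lborel h" and hm[measurable]: "h \<in> borel_measurable borel"
  shows "fourier_L1 h \<xi> * cnj (fourier_L1 h \<xi>) = complex_of_real (1/(2*pi)) * (\<integral>u. autocorr h u * fkernel \<xi> u \<partial>lborel)"
proof -
  define I where "I = (\<integral>x. h x * fkernel \<xi> x \<partial>lborel)"
  have "I * cnj I = I * (\<integral>y. cnj (h y * fkernel \<xi> y) \<partial>lborel)"
    unfolding I_def by (simp only: Bochner_Integration.integral_cnj)
  also have "\<dots> = (\<integral>y. I * cnj (h y * fkernel \<xi> y) \<partial>lborel)"
    by (rule integral_mult_right_zero[symmetric])
  also have "\<dots> = (\<integral>y. (\<integral>u. h (y + u) * cnj (h y) * fkernel \<xi> u \<partial>lborel) \<partial>lborel)"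
    unfolding I_def fourier_integral_shift ..
  also have "\<dots> = (\<integral>u. (\<integral>y. h (y + u) * cnj (h y) * fkernel \<xi> u \<partial>lborel) \<partial>lborel)"
  proof (rule lborel_pair.Fubini_integral[symmetric])
    show "integrable (lborel \<Otimes>\<^sub>M lborel) (\<lambda>(y, u). h (y + u) * cnj (h y) * fkernel \<xi> u)"
      using integrable_autocorr_integrand[OF hi hm, of "\<lambda>(y,u). fkernel \<xi> u"] by (simp add: split_beta')
  qed
  also have "\<dots> = (\<integral>u. autocorr h u * fkernel \<xi> u \<partial>lborel)"
    unfolding autocorr_def by simp
  finally have II: "I * cnj I = (\<integral>u. autocorr h u * fkernel \<xi> u \<partial>lborel)" .
  have "fourier_L1 h \<xi> * cnj (fourier_L1 h \<xi>) = complex_of_real (1 / sqrt (2 * pi) * (1 / sqrt (2 * pi))) * (I * cnj I)"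
    unfolding fourier_L1_fkernel I_def[symmetric]
    by (simp only: complex_cnj_mult complex_cnj_complex_of_real of_real_mult ac_simps)
  also have "1 / sqrt (2 * pi) * (1 / sqrt (2 * pi)) = 1 / (2*pi)"
    using pi_gt_zero by (simp add: field_simps)
  finally show ?thesis using II by simp
qed

lemma std_normal_fourier:
  "(\<integral>x. std_normal_density x *\<^sub>R iexp (a * x) \<partial>lborel) = complex_of_real (exp (-(a\<^sup>2)/2))"
proof -
  have "char std_normal_distribution a = (\<integral>x. std_normal_density x *\<^sub>R iexp (a * x) \<partial>lborel)"
    unfolding char_def by (subst integral_density) (auto simp: normal_density_nonneg)
  then show ?thesis by (simp add: char_std_normal_distribution)
qed

lemma gauss_fourier:
  assumes \<sigma>: "\<sigma> > 0"
  shows "(\<integral>\<xi>. complex_of_real (exp (-(\<sigma>*\<xi>)\<^sup>2/2)) * fkernel \<xi> u \<partial>lborel)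
           = complex_of_real (2*pi/\<sigma> * std_normal_density (u/\<sigma>))"
proof -
  define F where "F = (\<lambda>x. std_normal_density x *\<^sub>R iexp ((-u/\<sigma>) * x))"
  have char: "(\<integral>x. F x \<partial>lborel) = complex_of_real (exp (-((-u/\<sigma>)\<^sup>2)/2))"
    unfolding F_def by (rule std_normal_fourier)
  have rescale: "(\<integral>x. F x \<partial>lborel) = \<bar>\<sigma>\<bar> *\<^sub>R (\<integral>\<xi>. F (0 + \<sigma> * \<xi>) \<partial>lborel)"
    using \<sigma> by (intro lborel_integral_real_affine) simp
  have pointwise: "F (\<sigma> * \<xi>) = complex_of_real (1 / sqrt (2*pi)) * (complex_of_real (exp (-(\<sigma>*\<xi>)\<^sup>2/2)) * fkernel \<xi> u)" for \<xi>
  proof -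
    have "\<i> * complex_of_real (-u/\<sigma> * (\<sigma> * \<xi>)) = - \<i> * complex_of_real (\<xi> * u)"
      using \<sigma> by (simp add: field_simps)
    then show ?thesis
      unfolding F_def fkernel_def std_normal_density_def scaleR_conv_of_real by (simp add: ac_simps)
  qed
  have "(\<integral>\<xi>. complex_of_real (exp (-(\<sigma>*\<xi>)\<^sup>2/2)) * fkernel \<xi> u \<partial>lborel)
      = (\<integral>\<xi>. complex_of_real (sqrt (2*pi)) * F (0 + \<sigma> * \<xi>) \<partial>lborel)"
  proof (intro Bochner_Integration.integral_cong refl)
    fix \<xi>
    have "complex_of_real (sqrt (2*pi)) * F (0 + \<sigma> * \<xi>) = complex_of_real (sqrt (2*pi) * (1 / sqrt (2*pi))) * (complex_of_real (exp (-(\<sigma>*\<xi>)\<^sup>2/2)) * fkernel \<xi> u)"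
      unfolding pointwise add_0_left of_real_mult by (simp only: mult.assoc)
    also have "sqrt (2*pi) * (1 / sqrt (2*pi)) = 1" by simp
    finally show "complex_of_real (exp (-(\<sigma>*\<xi>)\<^sup>2/2)) * fkernel \<xi> u = complex_of_real (sqrt (2*pi)) * F (0 + \<sigma> * \<xi>)"
      by simp
  qed
  also have "\<dots> = complex_of_real (sqrt (2*pi)) * (\<integral>\<xi>. F (0 + \<sigma> * \<xi>) \<partial>lborel)" by simp
  also have "(\<integral>\<xi>. F (0 + \<sigma> * \<xi>) \<partial>lborel) = complex_of_real (1/\<sigma>) * (\<integral>x. F x \<partial>lborel)"
    using rescale \<sigma> by (simp add: scaleR_conv_of_real)
  also have "complex_of_real (sqrt (2*pi)) * (complex_of_real (1/\<sigma>) * (\<integral>x. F x \<partial>lborel))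
      = complex_of_real (sqrt (2*pi) / \<sigma> * exp (-(u/\<sigma>)\<^sup>2/2))"
    unfolding char by (simp add: power2_eq_square)
  also have "sqrt (2*pi) / \<sigma> * exp (-(u/\<sigma>)\<^sup>2/2) = 2*pi/\<sigma> * std_normal_density (u/\<sigma>)"
  proof -
    have "2*pi/\<sigma> * std_normal_density (u/\<sigma>) = 2*pi / sqrt (2*pi) * exp (-(u/\<sigma>)\<^sup>2/2) / \<sigma>"
      by (simp add: std_normal_density_def)
    also have "2*pi / sqrt (2*pi) = sqrt (2*pi)" by (rule real_div_sqrt) simp
    finally have "2*pi/\<sigma> * std_normal_density (u/\<sigma>) = sqrt (2*pi) * exp (-(u/\<sigma>)\<^sup>2/2) / \<sigma>" .
    then show ?thesis by (metis times_divide_eq_left)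
  qed
  finally show ?thesis .
qed

lemma gauss_integrable: "(\<sigma>::real) > 0 \<Longrightarrow> integrable lborel (\<lambda>\<xi>. exp (-(\<sigma>*\<xi>)\<^sup>2/2))"
proof -
  assume \<sigma>: "\<sigma> > 0"
  have "integrable lborel (\<lambda>\<xi>. std_normal_density (0 + \<sigma> * \<xi>))"
    using \<sigma> by (intro lborel_integrable_real_affine) auto
  then have "integrable lborel (\<lambda>\<xi>. sqrt (2*pi) * std_normal_density (0 + \<sigma> * \<xi>))" by simp
  then show ?thesis by (simp add: std_normal_density_def)
qed

text \<open>Fubini is justified because both the Gaussian and the autocorrelation are integrable.\<close>

lemma fourier_sq_gauss_weighted:
  assumes hi: "integrable lborel h" and hm[measurable]: "h \<in> borel_measurable borel" and \<sigma>: "\<sigma> > 0"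
  shows "(\<integral>\<xi>. complex_of_real (exp (-(\<sigma>*\<xi>)\<^sup>2/2)) * (fourier_L1 h \<xi> * cnj (fourier_L1 h \<xi>)) \<partial>lborel)
     = (\<integral>s. autocorr h (\<sigma> * s) * complex_of_real (std_normal_density s) \<partial>lborel)"
proof -
  define A where "A = autocorr h"
  define g where "g = (\<lambda>\<xi>. complex_of_real (exp (-(\<sigma>*\<xi>)\<^sup>2/2)))"
  have Ai: "integrable lborel A" unfolding A_def by (rule autocorr_integrable[OF hi hm])
  have [measurable]: "A \<in> borel_measurable borel" using Ai by (auto dest: borel_measurable_integrable)
  have "(\<integral>\<xi>. g \<xi> * (fourier_L1 h \<xi> * cnj (fourier_L1 h \<xi>)) \<partial>lborel)
      = (\<integral>\<xi>. complex_of_real (1/(2*pi)) * (\<integral>u. g \<xi> * (A u * fkernel \<xi> u) \<partial>lborel) \<partial>lborel)"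
    by (simp add: fourier_sq_autocorr[OF hi hm] A_def ac_simps)
  also have "\<dots> = complex_of_real (1/(2*pi)) * (\<integral>u. (\<integral>\<xi>. g \<xi> * (A u * fkernel \<xi> u) \<partial>lborel) \<partial>lborel)"
  proof -
    have "integrable (lborel \<Otimes>\<^sub>M lborel) (\<lambda>(\<xi>, u). g \<xi> * (A u * fkernel \<xi> u))"
      using gauss_integrable[OF \<sigma>] integrable_norm[OF Ai]
      by (rule integrable_tensor_dominated) (auto simp: g_def norm_mult)
    then show ?thesis by (simp add: lborel_pair.Fubini_integral)
  qed
  also have "\<dots> = complex_of_real (1/(2*pi)) * (\<integral>u. A u * complex_of_real (2*pi/\<sigma> * std_normal_density (u/\<sigma>)) \<partial>lborel)"
  proof (intro arg_cong[where f="(*) _"] Bochner_Integration.integral_cong refl)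
    fix u
    have "(\<integral>\<xi>. g \<xi> * (A u * fkernel \<xi> u) \<partial>lborel) = A u * (\<integral>\<xi>. g \<xi> * fkernel \<xi> u \<partial>lborel)"
      by (simp add: mult.left_commute[of _ "A u"])
    then show "(\<integral>\<xi>. g \<xi> * (A u * fkernel \<xi> u) \<partial>lborel) = A u * complex_of_real (2*pi/\<sigma> * std_normal_density (u/\<sigma>))"
      unfolding g_def gauss_fourier[OF \<sigma>] .
  qed
  also have "\<dots> = (\<integral>u. complex_of_real (1/(2*pi)) * (A u * complex_of_real (2*pi/\<sigma> * std_normal_density (u/\<sigma>))) \<partial>lborel)"
    by (rule integral_mult_right_zero[symmetric])
  also have "\<dots> = (\<integral>u. A u * complex_of_real (1/\<sigma> * std_normal_density (u/\<sigma>)) \<partial>lborel)"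
    by (intro Bochner_Integration.integral_cong refl) (simp add: field_simps)
  also have "\<dots> = \<bar>\<sigma>\<bar> *\<^sub>R (\<integral>s. A (0 + \<sigma> * s) * complex_of_real (1/\<sigma> * std_normal_density ((0 + \<sigma> * s)/\<sigma>)) \<partial>lborel)"
    using \<sigma> by (intro lborel_integral_real_affine) simp
  also have "\<dots> = (\<integral>s. A (\<sigma> * s) * complex_of_real (std_normal_density s) \<partial>lborel)"
    using \<sigma> by (simp add: scaleR_conv_of_real field_simps)
  finally show ?thesis by (simp add: g_def A_def)
qed

lemma fourier_L1_measurable[measurable]:
  assumes [measurable]: "h \<in> borel_measurable borel"
  shows "fourier_L1 h \<in> borel_measurable borel"
proof -
  have "(\<lambda>\<xi>. \<integral>x. h x * fkernel \<xi> x \<partial>lborel) \<in> borel_measurable lborel"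
    by measurable
  then show ?thesis unfolding fourier_L1_fkernel[abs_def] by simp
qed

lemma fourier_L1_bound:
  assumes "integrable lborel h"
  shows "cmod (fourier_L1 h \<xi>) \<le> 1 / sqrt (2*pi) * (\<integral>x. cmod (h x) \<partial>lborel)"
proof -
  have "cmod (\<integral>x. h x * fkernel \<xi> x \<partial>lborel) \<le> (\<integral>x. cmod (h x * fkernel \<xi> x) \<partial>lborel)"
    by (rule integral_norm_bound)
  also have "\<dots> = (\<integral>x. cmod (h x) \<partial>lborel)" by (simp add: norm_mult)
  finally have X: "cmod (\<integral>x. h x * fkernel \<xi> x \<partial>lborel) \<le> (\<integral>x. cmod (h x) \<partial>lborel)" .
  have "cmod (fourier_L1 h \<xi>) = \<bar>1 / sqrt (2*pi)\<bar> * cmod (\<integral>x. h x * fkernel \<xi> x \<partial>lborel)"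
    by (simp only: fourier_L1_fkernel norm_mult norm_of_real)
  also have "\<dots> \<le> \<bar>1 / sqrt (2*pi)\<bar> * (\<integral>x. cmod (h x) \<partial>lborel)"
    by (intro mult_left_mono X) auto
  finally show ?thesis by simp
qed

text \<open>The transform of an integrable function is bounded, so its square is integrable against
  a Gaussian weight.\<close>

lemma gauss_weighted_integrable:
  assumes hi: "integrable lborel h" and \<sigma>: "\<sigma> > 0"
  shows "integrable lborel (\<lambda>\<xi>. exp (-(\<sigma> * \<xi>)\<^sup>2/2) * (cmod (fourier_L1 h \<xi>))\<^sup>2)"
proof -
  have [measurable]: "h \<in> borel_measurable borel" using hi by (auto dest: borel_measurable_integrable)
  define B where "B = 1 / sqrt (2*pi) * (\<integral>x. cmod (h x) \<partial>lborel)"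
  have "(cmod (fourier_L1 h \<xi>))\<^sup>2 \<le> B\<^sup>2" for \<xi>
    unfolding B_def by (intro power_mono fourier_L1_bound[OF hi]) auto
  then have bound: "norm (exp (-(\<sigma> * \<xi>)\<^sup>2/2) * (cmod (fourier_L1 h \<xi>))\<^sup>2)
               \<le> norm (B\<^sup>2 * exp (-(\<sigma> * \<xi>)\<^sup>2/2))" for \<xi>
    by (simp add: abs_mult mult.commute mult_left_mono)
  show ?thesis
  proof (rule Bochner_Integration.integrable_bound[where f="\<lambda>\<xi>. B\<^sup>2 * exp (-(\<sigma> * \<xi>)\<^sup>2/2)"])
    show "integrable lborel (\<lambda>\<xi>. B\<^sup>2 * exp (-(\<sigma> * \<xi>)\<^sup>2/2))"
      using gauss_integrable[OF \<sigma>] by simp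
  qed (use bound in auto)
qed

text \<open>As \<open>\<sigma> \<rightarrow> 0\<close> the Gaussian-weighted integrals of \<open>|h^|^2\<close> tend to \<open>A(0)\<close>, the energy of \<open>h\<close>:
  dominated convergence, using that \<open>A\<close> is bounded and continuous at 0.\<close>

lemma gauss_weighted_energy_limit:
  assumes hi: "integrable lborel h" and h: "L2 h"
    and \<sigma>: "\<And>k. \<sigma> k > 0" and \<sigma>0: "\<sigma> \<longlonglongrightarrow> 0"
  shows "(\<lambda>k. \<integral>\<xi>. exp (-(\<sigma> k * \<xi>)\<^sup>2/2) * (cmod (fourier_L1 h \<xi>))\<^sup>2 \<partial>lborel) \<longlonglongrightarrow> enn2real (energy h)"
proof -
  have hm[measurable]: "h \<in> borel_measurable borel" using h by (simp add: L2_iff_energy)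
  have [measurable]: "autocorr h \<in> borel_measurable borel"
    using autocorr_integrable[OF hi hm] by (auto dest: borel_measurable_integrable)
  have eq: "complex_of_real (\<integral>\<xi>. exp (-(\<sigma> k * \<xi>)\<^sup>2/2) * (cmod (fourier_L1 h \<xi>))\<^sup>2 \<partial>lborel)
      = (\<integral>s. autocorr h (\<sigma> k * s) * complex_of_real (std_normal_density s) \<partial>lborel)" for k
  proof -
    have "complex_of_real (\<integral>\<xi>. exp (-(\<sigma> k * \<xi>)\<^sup>2/2) * (cmod (fourier_L1 h \<xi>))\<^sup>2 \<partial>lborel)
        = (\<integral>\<xi>. complex_of_real (exp (-(\<sigma> k * \<xi>)\<^sup>2/2) * (cmod (fourier_L1 h \<xi>))\<^sup>2) \<partial>lborel)"
      by (rule integral_complex_of_real[symmetric])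
    also have "\<dots> = (\<integral>\<xi>. complex_of_real (exp (-(\<sigma> k * \<xi>)\<^sup>2/2)) * (fourier_L1 h \<xi> * cnj (fourier_L1 h \<xi>)) \<partial>lborel)"
      by (intro Bochner_Integration.integral_cong refl) (simp add: complex_mult_cnj cmod_power2)
    finally show ?thesis unfolding fourier_sq_gauss_weighted[OF hi hm \<sigma>] .
  qed
  have "(\<lambda>k. \<integral>s. autocorr h (\<sigma> k * s) * complex_of_real (std_normal_density s) \<partial>lborel)
      \<longlonglongrightarrow> (\<integral>s. autocorr h 0 * complex_of_real (std_normal_density s) \<partial>lborel)"
  proof (rule integral_dominated_convergence[where w="\<lambda>s. enn2real (energy h) * std_normal_density s"])
    show "AE s in lborel. (\<lambda>k. autocorr h (\<sigma> k * s) * complex_of_real (std_normal_density s))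
            \<longlonglongrightarrow> autocorr h 0 * complex_of_real (std_normal_density s)"
    proof (intro AE_I2 tendsto_intros)
      fix s :: real
      have "(\<lambda>k. \<sigma> k * s) \<longlonglongrightarrow> 0" using tendsto_mult_left_zero[OF \<sigma>0] by simp
      then show "(\<lambda>k. autocorr h (\<sigma> k * s)) \<longlonglongrightarrow> autocorr h 0"
        by (rule isCont_tendsto_compose[OF autocorr_continuous_at_0[OF h]])
    qed
    show "AE s in lborel. norm (autocorr h (\<sigma> k * s) * complex_of_real (std_normal_density s))
            \<le> enn2real (energy h) * std_normal_density s" for k
      using autocorr_bound(2)[OF h, of "\<sigma> k * s" for s]
      by (intro AE_I2) (simp add: norm_mult normal_density_nonneg mult_right_mono)
  qed auto
  also have "(\<integral>s. autocorr h 0 * complex_of_real (std_normal_density s) \<partial>lborel) = autocorr h 0"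
    using integral_std_normal_moment_even[of 0] by simp
  finally have "(\<lambda>k. Re (complex_of_real (\<integral>\<xi>. exp (-(\<sigma> k * \<xi>)\<^sup>2/2) * (cmod (fourier_L1 h \<xi>))\<^sup>2 \<partial>lborel)))
      \<longlonglongrightarrow> Re (autocorr h 0)"
    unfolding eq by (rule tendsto_Re)
  then show ?thesis by (simp add: autocorr_at_0[OF hm])
qed

text \<open>Plancherel for \<open>h \<in> L1 \<inter> L2\<close>: the Gaussian weights increase to 1 as \<open>\<sigma> \<down> 0\<close>, so by
  monotone convergence the same integrals also tend to the energy of \<open>h^\<close>.\<close>

lemma plancherel_L1:
  assumes hi: "integrable lborel h" and h: "L2 h"
  shows "energy (fourier_L1 h) = energy h"
proof -
  have [measurable]: "h \<in> borel_measurable borel" and hf: "energy h < \<infinity>"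
    using h by (auto simp: L2_iff_energy)
  define \<sigma> where "\<sigma> = (\<lambda>k::nat. 1 / (real k + 1))"
  have \<sigma>: "\<sigma> k > 0" for k by (simp add: \<sigma>_def)
  have \<sigma>0: "\<sigma> \<longlonglongrightarrow> 0" using LIMSEQ_inverse_real_of_nat by (simp add: \<sigma>_def inverse_eq_divide add.commute)
  define g where "g = (\<lambda>k \<xi>. exp (-(\<sigma> k * \<xi>)\<^sup>2/2))"
  define F where "F = fourier_L1 h"
  have [measurable]: "g k \<in> borel_measurable borel" for k unfolding g_def by measurable
  have integrable: "integrable lborel (\<lambda>\<xi>. g k \<xi> * (cmod (F \<xi>))\<^sup>2)" for k
    unfolding g_def F_def by (rule gauss_weighted_integrable[OF hi \<sigma>])
  have "(\<lambda>k. \<integral>\<^sup>+\<xi>. ennreal (g k \<xi> * (cmod (F \<xi>))\<^sup>2) \<partial>lborel) \<longlonglongrightarrow> energy F"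
    unfolding energy_def
  proof (rule nn_integral_LIMSEQ)
    show "incseq (\<lambda>k \<xi>. ennreal (g k \<xi> * (cmod (F \<xi>))\<^sup>2))"
    proof (intro incseq_SucI le_funI ennreal_leI mult_right_mono)
      fix k \<xi>
      have "(\<sigma> (Suc k) * \<xi>)\<^sup>2 \<le> (\<sigma> k * \<xi>)\<^sup>2"
        unfolding power_mult_distrib by (intro mult_right_mono power_mono) (auto simp: \<sigma>_def divide_simps)
      then show "g k \<xi> \<le> g (Suc k) \<xi>" unfolding g_def by simp
    qed simp
    fix \<xi> :: real
    have "(\<lambda>k. g k \<xi> * (cmod (F \<xi>))\<^sup>2) \<longlonglongrightarrow> exp (-(0 * \<xi>)\<^sup>2/2) * (cmod (F \<xi>))\<^sup>2"
      unfolding g_def by (intro tendsto_intros \<sigma>0) auto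
    then show "(\<lambda>k. ennreal (g k \<xi> * (cmod (F \<xi>))\<^sup>2)) \<longlonglongrightarrow> ennreal ((cmod (F \<xi>))\<^sup>2)"
      by (intro tendsto_ennrealI) simp
  qed (simp add: F_def)
  moreover have "(\<lambda>k. \<integral>\<^sup>+\<xi>. ennreal (g k \<xi> * (cmod (F \<xi>))\<^sup>2) \<partial>lborel) \<longlonglongrightarrow> ennreal (enn2real (energy h))"
  proof -
    have "(\<integral>\<^sup>+\<xi>. ennreal (g k \<xi> * (cmod (F \<xi>))\<^sup>2) \<partial>lborel) = ennreal (\<integral>\<xi>. g k \<xi> * (cmod (F \<xi>))\<^sup>2 \<partial>lborel)" for k
      by (rule nn_integral_eq_integral[OF integrable]) (simp add: g_def)
    moreover have "(\<lambda>k. ennreal (\<integral>\<xi>. g k \<xi> * (cmod (F \<xi>))\<^sup>2 \<partial>lborel)) \<longlonglongrightarrow> ennreal (enn2real (energy h))"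
      using gauss_weighted_energy_limit[OF hi h \<sigma> \<sigma>0] unfolding g_def F_def by (rule tendsto_ennrealI)
    ultimately show ?thesis by simp
  qed
  ultimately have "energy F = ennreal (enn2real (energy h))" by (rule LIMSEQ_unique)
  then show ?thesis using hf by (simp add: F_def)
qed

lemma L2norm_triangle:
  assumes a: "L2 a" and b: "L2 b"
  shows "L2norm (\<lambda>x. a x + b x) \<le> L2norm a + L2norm b"
proof -
  have [measurable]: "a \<in> borel_measurable borel" and af: "energy a < \<infinity>" using a by (auto simp: L2_iff_energy)
  have [measurable]: "b \<in> borel_measurable borel" and bf: "energy b < \<infinity>" using b by (auto simp: L2_iff_energy)
  define X where "X = (\<integral>\<^sup>+x. ennreal (cmod (a x) * cmod (b x)) \<partial>lborel)"
  have Xf: "X < \<infinity>" and Xr: "enn2real X \<le> sqrt (enn2real (energy a) * enn2real (energy b))"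
    unfolding X_def using energy_product_bound[OF _ _ af bf] by auto
  have "energy (\<lambda>x. a x + b x) \<le> (\<integral>\<^sup>+x. ennreal ((cmod (a x))\<^sup>2) + 2 * ennreal (cmod (a x) * cmod (b x)) + ennreal ((cmod (b x))\<^sup>2) \<partial>lborel)"
    unfolding energy_def
  proof (intro nn_integral_mono)
    fix x
    have "(cmod (a x + b x))\<^sup>2 \<le> (cmod (a x) + cmod (b x))\<^sup>2"
      by (intro power_mono norm_triangle_ineq) auto
    also have "\<dots> = (cmod (a x))\<^sup>2 + 2 * (cmod (a x) * cmod (b x)) + (cmod (b x))\<^sup>2"
      by (simp add: power2_sum)
    finally have "ennreal ((cmod (a x + b x))\<^sup>2) \<le> ennreal ((cmod (a x))\<^sup>2 + 2 * (cmod (a x) * cmod (b x)) + (cmod (b x))\<^sup>2)"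
      by (rule ennreal_leI)
    also have "\<dots> = ennreal ((cmod (a x))\<^sup>2) + ennreal (2 * (cmod (a x) * cmod (b x))) + ennreal ((cmod (b x))\<^sup>2)"
      by (simp del: ennreal_mult ennreal_mult')
    also have "ennreal (2 * (cmod (a x) * cmod (b x))) = 2 * ennreal (cmod (a x) * cmod (b x))"
      by (subst ennreal_mult) auto
    finally show "ennreal ((cmod (a x + b x))\<^sup>2) \<le> ennreal ((cmod (a x))\<^sup>2) + 2 * ennreal (cmod (a x) * cmod (b x)) + ennreal ((cmod (b x))\<^sup>2)" .
  qed
  also have "\<dots> = energy a + 2 * X + energy b" unfolding energy_def X_def
    by (subst nn_integral_add, simp, simp)+ (auto simp: nn_integral_cmult)
  finally have le: "energy (\<lambda>x. a x + b x) \<le> energy a + 2 * X + energy b" .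
  have "enn2real (energy (\<lambda>x. a x + b x)) \<le> enn2real (energy a + 2 * X + energy b)"
    using le af bf Xf by (intro enn2real_mono) (auto simp: ennreal_mult_less_top)
  also have "\<dots> = enn2real (energy a) + 2 * enn2real X + enn2real (energy b)"
    using af bf Xf by (simp add: enn2real_plus ennreal_mult_less_top enn2real_mult)
  also have "\<dots> \<le> enn2real (energy a) + 2 * sqrt (enn2real (energy a) * enn2real (energy b)) + enn2real (energy b)"
    using Xr by simp
  also have "\<dots> = (sqrt (enn2real (energy a)) + sqrt (enn2real (energy b)))\<^sup>2"
    by (simp add: power2_sum real_sqrt_mult)
  finally have "sqrt (enn2real (energy (\<lambda>x. a x + b x))) \<le> sqrt (enn2real (energy a)) + sqrt (enn2real (energy b))"
    by (simp add: real_le_lsqrt real_sqrt_le_iff real_le_rsqrt)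
  then show ?thesis by (simp add: L2norm_energy)
qed

lemma L2_uminus: "L2 b \<Longrightarrow> L2 (\<lambda>x. - b x)"
  by (simp add: L2_iff_energy energy_def)

lemma L2norm_diff_triangle:
  assumes a: "L2 a" and b: "L2 b"
  shows "L2norm (\<lambda>x. a x - b x) \<le> L2norm a + L2norm b"
  using L2norm_triangle[OF a L2_uminus[OF b]] by (simp add: L2norm_def)

lemma L2norm_diff_abs:
  assumes a: "L2 a" and b: "L2 b"
  shows "\<bar>L2norm a - L2norm b\<bar> \<le> L2norm (\<lambda>x. a x - b x)"
proof -
  have "L2norm a \<le> L2norm (\<lambda>x. a x - b x) + L2norm b"
    using L2norm_triangle[OF L2_diff[OF a b] b] by simp
  moreover have "L2norm b \<le> L2norm (\<lambda>x. b x - a x) + L2norm a"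
    using L2norm_triangle[OF L2_diff[OF b a] a] by simp
  moreover have "L2norm (\<lambda>x. b x - a x) = L2norm (\<lambda>x. a x - b x)"
    unfolding L2norm_def by (simp add: norm_minus_commute)
  ultimately show ?thesis by linarith
qed

definition truncate :: "nat \<Rightarrow> (real \<Rightarrow> complex) \<Rightarrow> real \<Rightarrow> complex" where
  "truncate n f x = indicator {- real n .. real n} x * f x"

lemma fourier_L2_iff:
  "fourier_L2 f g \<longleftrightarrow> L2 f \<and> L2 g \<and>
     (\<lambda>n. L2norm (\<lambda>\<xi>. fourier_L1 (truncate n f) \<xi> - g \<xi>)) \<longlonglongrightarrow> 0"
  unfolding fourier_L2_def truncate_def ..

lemma truncate_diff: "truncate n (\<lambda>x. f x - g x) = (\<lambda>x. truncate n f x - truncate n g x)"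
  by (auto simp: truncate_def algebra_simps)

lemma truncate_L1_L2:
  assumes f: "L2 f"
  shows "integrable lborel (truncate n f)" and "L2 (truncate n f)"
proof -
  have [measurable]: "f \<in> borel_measurable borel" and ff: "energy f < \<infinity>" using f by (auto simp: L2_iff_energy)
  have [measurable]: "truncate n f \<in> borel_measurable borel" unfolding truncate_def by measurable
  have nrm: "cmod (truncate n f x) = indicator {- real n..real n} x * cmod (f x)" for x
    by (simp add: truncate_def norm_mult split: split_indicator)
  have "t \<le> 1 + t\<^sup>2" for t :: real
  proof -
    have "0 \<le> (t - 1)\<^sup>2" "0 \<le> t\<^sup>2" by simp_all
    then show ?thesis unfolding power2_diff power_one mult_1_right by linarith
  qed
  then have "cmod (f x) \<le> 1 + (cmod (f x))\<^sup>2" for x .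
  then have "(\<integral>\<^sup>+x. ennreal (cmod (truncate n f x)) \<partial>lborel)
      \<le> (\<integral>\<^sup>+x. ennreal (indicator {- real n..real n} x) + ennreal ((cmod (f x))\<^sup>2) \<partial>lborel)"
    unfolding nrm
    by (intro nn_integral_mono)
       (auto simp: ennreal_plus[symmetric] simp del: ennreal_plus split: split_indicator intro!: ennreal_leI)
  also have "\<dots> = ennreal (2 * real n) + energy f"
    unfolding energy_def by (subst nn_integral_add) (auto simp: ennreal_indicator)
  also have "\<dots> < \<infinity>" using ff by simp
  finally show "integrable lborel (truncate n f)"
    unfolding integrable_iff_bounded by simp
  have "energy (truncate n f) \<le> energy f"
    unfolding energy_def nrm
    by (intro nn_integral_mono ennreal_leI power_mono) (auto split: split_indicator)
  then show "L2 (truncate n f)"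
    using ff unfolding L2_iff_energy by (auto intro: le_less_trans)
qed

lemma truncate_L2norm_limit:
  assumes d: "L2 d"
  shows "(\<lambda>n. L2norm (truncate n d)) \<longlonglongrightarrow> L2norm d"
proof -
  have [measurable]: "d \<in> borel_measurable borel" and df: "energy d < \<infinity>" using d by (auto simp: L2_iff_energy)
  have [measurable]: "truncate n d \<in> borel_measurable borel" for n unfolding truncate_def by measurable
  have "(\<lambda>n. energy (truncate n d)) \<longlonglongrightarrow> energy d"
    unfolding energy_def
  proof (rule nn_integral_LIMSEQ)
    show "incseq (\<lambda>n x. ennreal ((cmod (truncate n d x))\<^sup>2))"
      by (intro incseq_SucI le_funI ennreal_leI power_mono)
         (auto simp: truncate_def norm_mult split: split_indicator)
    fix x :: real
    obtain N :: nat where N: "\<bar>x\<bar> \<le> real N" using real_arch_simple by blast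
    have "\<forall>\<^sub>F n in sequentially. ennreal ((cmod (truncate n d x))\<^sup>2) = ennreal ((cmod (d x))\<^sup>2)"
      unfolding eventually_sequentially using N
      by (intro exI[of _ N] allI impI) (auto simp: truncate_def indicator_def)
    then show "(\<lambda>n. ennreal ((cmod (truncate n d x))\<^sup>2)) \<longlonglongrightarrow> ennreal ((cmod (d x))\<^sup>2)"
      by (rule tendsto_eventually)
  qed simp
  then have "(\<lambda>n. enn2real (energy (truncate n d))) \<longlonglongrightarrow> enn2real (energy d)"
    using df by (intro tendsto_enn2real) auto
  then show ?thesis by (simp add: L2norm_energy tendsto_real_sqrt)
qed

lemma integrable_mult_fkernel: "integrable lborel u \<Longrightarrow> integrable lborel (\<lambda>x. u x * fkernel \<xi> x)"
  by (rule Bochner_Integration.integrable_bound[where f=u])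
     (auto simp: norm_mult dest: borel_measurable_integrable)

lemma fourier_L1_diff:
  assumes "integrable lborel u" "integrable lborel v"
  shows "fourier_L1 (\<lambda>x. u x - v x) \<xi> = fourier_L1 u \<xi> - fourier_L1 v \<xi>"
proof -
  have "(\<integral>x. (u x - v x) * fkernel \<xi> x \<partial>lborel) = (\<integral>x. u x * fkernel \<xi> x - v x * fkernel \<xi> x \<partial>lborel)"
    by (simp add: left_diff_distrib)
  also have "\<dots> = (\<integral>x. u x * fkernel \<xi> x \<partial>lborel) - (\<integral>x. v x * fkernel \<xi> x \<partial>lborel)"
    by (rule Bochner_Integration.integral_diff[OF integrable_mult_fkernel[OF assms(1)] integrable_mult_fkernel[OF assms(2)]])
  finally show ?thesis unfolding fourier_L1_fkernel by (simp add: right_diff_distrib)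
qed

lemma L2_fourier_L1:
  assumes "integrable lborel h" "L2 h"
  shows "L2 (fourier_L1 h)"
  using plancherel_L1[OF assms] assms(2) by (auto simp: L2_iff_energy intro: fourier_L1_measurable)

lemma fourier_L2_diff:
  assumes Ff: "fourier_L2 f g" and Ff': "fourier_L2 f' g'"
  shows "fourier_L2 (\<lambda>x. f x - f' x) (\<lambda>\<xi>. g \<xi> - g' \<xi>)"
proof -
  have f: "L2 f" and g: "L2 g" and af: "(\<lambda>n. L2norm (\<lambda>\<xi>. fourier_L1 (truncate n f) \<xi> - g \<xi>)) \<longlonglongrightarrow> 0"
    using Ff by (auto simp: fourier_L2_iff)
  have f': "L2 f'" and g': "L2 g'" and af': "(\<lambda>n. L2norm (\<lambda>\<xi>. fourier_L1 (truncate n f') \<xi> - g' \<xi>)) \<longlonglongrightarrow> 0"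
    using Ff' by (auto simp: fourier_L2_iff)
  define a where "a = (\<lambda>n \<xi>. fourier_L1 (truncate n f) \<xi> - g \<xi>)"
  define b where "b = (\<lambda>n \<xi>. fourier_L1 (truncate n f') \<xi> - g' \<xi>)"
  have "L2 (a n)" "L2 (b n)" for n
    unfolding a_def b_def using truncate_L1_L2 f f' g g' by (auto intro!: L2_diff L2_fourier_L1)
  moreover have "fourier_L1 (truncate n (\<lambda>x. f x - f' x)) \<xi> - (g \<xi> - g' \<xi>) = a n \<xi> - b n \<xi>" for n \<xi>
    unfolding truncate_diff a_def b_def
    by (simp add: fourier_L1_diff[OF truncate_L1_L2(1)[OF f] truncate_L1_L2(1)[OF f']])
  ultimately have bound: "L2norm (\<lambda>\<xi>. fourier_L1 (truncate n (\<lambda>x. f x - f' x)) \<xi> - (g \<xi> - g' \<xi>))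
      \<le> L2norm (a n) + L2norm (b n)" for n
    by (simp add: L2norm_diff_triangle)
  have "(\<lambda>n. L2norm (\<lambda>\<xi>. fourier_L1 (truncate n (\<lambda>x. f x - f' x)) \<xi> - (g \<xi> - g' \<xi>))) \<longlonglongrightarrow> 0"
  proof (rule Lim_null_comparison)
    show "(\<lambda>n. L2norm (a n) + L2norm (b n)) \<longlonglongrightarrow> 0"
      using tendsto_add[OF af af'] by (simp add: a_def b_def)
    show "\<forall>\<^sub>F n in sequentially. norm (L2norm (\<lambda>\<xi>. fourier_L1 (truncate n (\<lambda>x. f x - f' x)) \<xi> - (g \<xi> - g' \<xi>)))
        \<le> L2norm (a n) + L2norm (b n)"
      using bound by (simp add: L2norm_def)
  qed
  then show ?thesis using L2_diff[OF f f'] L2_diff[OF g g'] by (simp add: fourier_L2_iff)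
qed

lemma fourier_L2_isometry:
  assumes Ff: "fourier_L2 f g"
  shows "L2norm f = L2norm g"
proof -
  have f: "L2 f" and g: "L2 g" and af: "(\<lambda>n. L2norm (\<lambda>\<xi>. fourier_L1 (truncate n f) \<xi> - g \<xi>)) \<longlonglongrightarrow> 0"
    using Ff by (auto simp: fourier_L2_iff)
  have FL2: "L2 (fourier_L1 (truncate n f))" for n
    using truncate_L1_L2[OF f] by (rule L2_fourier_L1)
  have same: "L2norm (fourier_L1 (truncate n f)) = L2norm (truncate n f)" for n
    using plancherel_L1[OF truncate_L1_L2[OF f]] truncate_L1_L2(2)[OF f] FL2
    by (simp add: L2norm_energy L2_iff_energy)
  have "(\<lambda>n. L2norm (fourier_L1 (truncate n f))) \<longlonglongrightarrow> L2norm g"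
  proof (rule LIM_zero_cancel, rule Lim_null_comparison[OF always_eventually af], intro allI)
    fix n
    show "norm (L2norm (fourier_L1 (truncate n f)) - L2norm g)
        \<le> L2norm (\<lambda>\<xi>. fourier_L1 (truncate n f) \<xi> - g \<xi>)"
      using L2norm_diff_abs[OF FL2 g] by simp
  qed
  moreover have "(\<lambda>n. L2norm (fourier_L1 (truncate n f))) \<longlonglongrightarrow> L2norm f"
    unfolding same by (rule truncate_L2norm_limit[OF f])
  ultimately show ?thesis by (rule LIMSEQ_unique[rotated])
qed

text \<open>The Fourier multiplier of the regularised problem, and its uniform bound:
  writing \<open>s = exp(pT\<xi>^2)\<close> and \<open>a = (T-t)/(pT) \<in> [0,1]\<close>, the multiplier is
  \<open>s^a / (1 + \<beta> s) = \<beta>^-a (\<beta> s)^a / (1 + \<beta> s) \<le> \<beta>^-a\<close> since \<open>y^a \<le> 1 + y\<close>.\<close>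

definition reg_multiplier :: "real \<Rightarrow> real \<Rightarrow> real \<Rightarrow> real \<Rightarrow> real \<Rightarrow> real" where
  "reg_multiplier T p \<beta> t \<xi> = exp ((T - t) * \<xi>\<^sup>2) / (1 + \<beta> * exp (p * T * \<xi>\<^sup>2))"

lemma reg_solution_iff:
  "reg_solution T p \<beta> \<psi> W \<longleftrightarrow> (\<exists>\<psi>h. fourier_L2 \<psi> \<psi>h \<and>
     (\<forall>t\<in>{0..T}. fourier_L2 (\<lambda>x. W x t) (\<lambda>\<xi>. complex_of_real (reg_multiplier T p \<beta> t \<xi>) * \<psi>h \<xi>)))"
  unfolding reg_solution_def reg_multiplier_def ..

lemma powr_le_1_plus:
  fixes y a :: real
  assumes y: "y > 0" and a: "0 \<le> a" "a \<le> 1"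
  shows "y powr a \<le> 1 + y"
proof (cases "y \<ge> 1")
  case True
  then have "y powr a \<le> y powr 1" using a by (intro powr_mono) auto
  then show ?thesis using y by simp
next
  case False
  then have "y powr a \<le> 1 powr a" using y a by (intro powr_mono2) auto
  then show ?thesis using y by simp
qed

lemma reg_multiplier_bound:
  fixes T p \<beta> t \<xi> :: real
  assumes T: "T > 0" and p: "p > 1" and \<beta>: "\<beta> > 0" and t: "0 \<le> t" "t \<le> T"
  shows "\<bar>reg_multiplier T p \<beta> t \<xi>\<bar> \<le> \<beta> powr ((t - T) / (p * T))"
proof -
  define a where "a = (T - t) / (p * T)"
  define s where "s = exp (p * T * \<xi>\<^sup>2)"
  have pT: "p * T > 0" using p T by simp
  have a0: "0 \<le> a" unfolding a_def using t pT by simp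
  have "T \<le> p * T" using p T by simp
  then have "T - t \<le> p * T" using t by linarith
  then have a1: "a \<le> 1" unfolding a_def using pT by (simp add: divide_le_eq)
  have s: "s > 0" by (simp add: s_def)
  have e: "exp ((T - t) * \<xi>\<^sup>2) = s powr a"
    using p T by (simp add: s_def a_def powr_def)
  have "(\<beta> * s) powr a \<le> 1 + \<beta> * s" using \<beta> s a0 a1 by (intro powr_le_1_plus) auto
  then have "\<beta> powr a * s powr a \<le> 1 + \<beta> * s" using \<beta> s by (simp add: powr_mult)
  then have "s powr a \<le> (1 + \<beta> * s) * \<beta> powr (- a)"
    using \<beta> by (simp add: powr_minus field_simps)
  then have "s powr a / (1 + \<beta> * s) \<le> \<beta> powr (- a)"
    using \<beta> s by (simp add: divide_le_eq mult.commute add_pos_pos)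
  moreover have "- a = (t - T) / (p * T)" unfolding a_def by (simp add: minus_divide_left)
  ultimately have "reg_multiplier T p \<beta> t \<xi> \<le> \<beta> powr ((t - T) / (p * T))"
    using e by (simp add: reg_multiplier_def s_def)
  moreover have "reg_multiplier T p \<beta> t \<xi> \<ge> 0"
    unfolding reg_multiplier_def using \<beta> by (simp add: add_pos_pos less_imp_le)
  ultimately show ?thesis by simp
qed

lemma L2norm_mult_le:
  assumes u: "L2 u" and [measurable]: "M \<in> borel_measurable borel" and MC: "\<And>\<xi>. \<bar>M \<xi>\<bar> \<le> C"
  shows "L2norm (\<lambda>\<xi>. complex_of_real (M \<xi>) * u \<xi>) \<le> C * L2norm u"
proof -
  have [measurable]: "u \<in> borel_measurable borel" and uf: "energy u < \<infinity>" using u by (auto simp: L2_iff_energy)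
  have C: "C \<ge> 0" using MC[of 0] by simp
  have "energy (\<lambda>\<xi>. complex_of_real (M \<xi>) * u \<xi>) \<le> (\<integral>\<^sup>+\<xi>. ennreal (C\<^sup>2) * ennreal ((cmod (u \<xi>))\<^sup>2) \<partial>lborel)"
    unfolding energy_def
  proof (intro nn_integral_mono)
    fix \<xi>
    have "(cmod (complex_of_real (M \<xi>) * u \<xi>))\<^sup>2 = (\<bar>M \<xi>\<bar>)\<^sup>2 * (cmod (u \<xi>))\<^sup>2"
      by (simp add: norm_mult power_mult_distrib)
    also have "\<dots> \<le> C\<^sup>2 * (cmod (u \<xi>))\<^sup>2"
      by (intro mult_right_mono power_mono MC) auto
    finally show "ennreal ((cmod (complex_of_real (M \<xi>) * u \<xi>))\<^sup>2) \<le> ennreal (C\<^sup>2) * ennreal ((cmod (u \<xi>))\<^sup>2)"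
      by (simp add: ennreal_mult[symmetric] ennreal_leI)
  qed
  also have "\<dots> = ennreal (C\<^sup>2) * energy u" unfolding energy_def by (rule nn_integral_cmult) auto
  finally have le: "energy (\<lambda>\<xi>. complex_of_real (M \<xi>) * u \<xi>) \<le> ennreal (C\<^sup>2) * energy u" .
  have "enn2real (energy (\<lambda>\<xi>. complex_of_real (M \<xi>) * u \<xi>)) \<le> enn2real (ennreal (C\<^sup>2) * energy u)"
    using le uf by (intro enn2real_mono) (auto simp: ennreal_mult_less_top)
  also have "\<dots> = C\<^sup>2 * enn2real (energy u)" by (simp add: enn2real_mult)
  finally have "sqrt (enn2real (energy (\<lambda>\<xi>. complex_of_real (M \<xi>) * u \<xi>))) \<le> sqrt (C\<^sup>2 * enn2real (energy u))"
    by (rule real_sqrt_le_mono)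
  also have "\<dots> = C * sqrt (enn2real (energy u))" using C by (simp add: real_sqrt_mult)
  finally show ?thesis by (simp add: L2norm_energy)
qed

theorem theorem1:
  fixes T p \<beta> :: real and \<phi> \<omega> :: "real \<Rightarrow> complex" and w v :: "real \<Rightarrow> real \<Rightarrow> complex"
  assumes "T > 0" and "p > 1" and "\<beta> > 0"
    and "L2 \<phi>" and "L2 \<omega>"
    and "reg_solution T p \<beta> \<phi> w" and "reg_solution T p \<beta> \<omega> v"
  shows "\<forall>t\<in>{0..T}. L2norm (\<lambda>x. w x t - v x t) \<le> \<beta> powr ((t - T) / (p * T)) * L2norm (\<lambda>x. \<phi> x - \<omega> x)"
proof
  fix t assume t: "t \<in> {0..T}"
  define m where "m = reg_multiplier T p \<beta> t"
  obtain \<phi>h \<omega>h where F\<phi>: "fourier_L2 \<phi> \<phi>h" and F\<omega>: "fourier_L2 \<omega> \<omega>h"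
    and Fw: "fourier_L2 (\<lambda>x. w x t) (\<lambda>\<xi>. complex_of_real (m \<xi>) * \<phi>h \<xi>)"
    and Fv: "fourier_L2 (\<lambda>x. v x t) (\<lambda>\<xi>. complex_of_real (m \<xi>) * \<omega>h \<xi>)"
    using assms(6,7) t unfolding reg_solution_iff m_def by blast
  have "fourier_L2 (\<lambda>x. w x t - v x t) (\<lambda>\<xi>. complex_of_real (m \<xi>) * (\<phi>h \<xi> - \<omega>h \<xi>))"
    using fourier_L2_diff[OF Fw Fv] by (simp add: right_diff_distrib)
  then have "L2norm (\<lambda>x. w x t - v x t) = L2norm (\<lambda>\<xi>. complex_of_real (m \<xi>) * (\<phi>h \<xi> - \<omega>h \<xi>))"
    by (rule fourier_L2_isometry)
  also have "\<dots> \<le> \<beta> powr ((t - T) / (p * T)) * L2norm (\<lambda>\<xi>. \<phi>h \<xi> - \<omega>h \<xi>)"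
    using F\<phi> F\<omega> t reg_multiplier_bound[OF assms(1-3)]
    by (intro L2norm_mult_le L2_diff) (auto simp: fourier_L2_def m_def reg_multiplier_def)
  also have "L2norm (\<lambda>\<xi>. \<phi>h \<xi> - \<omega>h \<xi>) = L2norm (\<lambda>x. \<phi> x - \<omega> x)"
    using fourier_L2_isometry[OF fourier_L2_diff[OF F\<phi> F\<omega>]] by simp
  finally show "L2norm (\<lambda>x. w x t - v x t) \<le> \<beta> powr ((t - T) / (p * T)) * L2norm (\<lambda>x. \<phi> x - \<omega> x)" .
qed

end
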